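(* Let $p\geq1$ and let $l,y,l',y'\in D(\mathbb{R}^+,\mathbb{R}^d)$ be such that $l_0\leq y_0$ and $l'_0\leq y'_0$. Let $(x,k)=SP_l(y)$ and $(x',k')=SP_{l'}(y')$. Then for every $T\in\mathbb{R}^+$, \[ \bar V_p(x-x')_T\leq(d+1)\bar V_p(y-y')_T+d\bar V_p(l-l')_T \] and \[ \bar V_p(k-k')_T\leq d\bar V_p(y-y')_T+d\bar V_p(l-l')_T. \]
   Context: $\mathbb{R}^+=[0,\infty)$; $D(\mathbb{R}^+,\mathbb{R}^d)$ is the space of càdlàg functions $\mathbb{R}^+\to\mathbb{R}^d$. For such $x$, $v_p(x)_{[a,b]}=\sup\sum_{i=1}^n|x_{t_i}-x_{t_{i-1}}|^p$ over subdivisions $a=t_0<\dots<t_n=b$ ($|\cdot|$ Euclidean norm), $V_p(x)_{[a,b]}=(v_p(x)_{[a,b]})^{1/p}$, $\bar V_p(x)_{[a,b]}=V_p(x)_{[a,b]}+|x_a|$, and $\bar V_p(x)_T=\bar V_p(x)_{[0,T]}$. Inequalities between vectors/functions are componentwise (and for all $t$). Skorokhod problem: given $y,l\in D(\mathbb{R}^+,\mathbb{R}^d)$ with $l_0\leq y_0$, $(x,k)=SP_l(y)$ means $x,k\in D(\mathbb{R}^+,\mathbb{R}^d)$, (i) $x_t=y_t+k_t\geq l_t$ for all $t$; (ii) $k_0=0$, each $k^i$ is nondecreasing and $\int_0^t(x^i_s-l^i_s)\,dk^i_s=0$ for all $t$, $i=1,\dots,d$. *)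

theory Defs
  imports "HOL-Analysis.Analysis"
begin

text \<open>Paths R^+ -> R^d are functions real => real^'d; only values at t >= 0 matter.
  The dimension d is CARD('d).\<close>

definition cadlag :: "(real \<Rightarrow> 'a::topological_space) \<Rightarrow> bool" where
  "cadlag f \<longleftrightarrow>
     (\<forall>t\<ge>0. (f \<longlongrightarrow> f t) (at_right t)) \<and>
     (\<forall>t>0. \<exists>L. (f \<longlongrightarrow> L) (at_left t))"

definition subdivision :: "real \<Rightarrow> real \<Rightarrow> real list \<Rightarrow> bool" where
  "subdivision a b ts \<longleftrightarrow> ts \<noteq> [] \<and> hd ts = a \<and> last ts = b \<and> sorted_wrt (<) ts"

definition var_sum :: "real \<Rightarrow> (real \<Rightarrow> 'a::real_normed_vector) \<Rightarrow> real list \<Rightarrow> real" where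
  "var_sum p x ts = (\<Sum>i<length ts - 1. norm (x (ts ! Suc i) - x (ts ! i)) powr p)"

definition pvar :: "real \<Rightarrow> (real \<Rightarrow> 'a::real_normed_vector) \<Rightarrow> real \<Rightarrow> real \<Rightarrow> ennreal" where
  "pvar p x a b = (SUP ts\<in>{ts. subdivision a b ts}. ennreal (var_sum p x ts))"

definition Vp :: "real \<Rightarrow> (real \<Rightarrow> 'a::real_normed_vector) \<Rightarrow> real \<Rightarrow> real \<Rightarrow> ennreal" where
  "Vp p x a b = (if pvar p x a b = \<infinity> then \<infinity> else ennreal (enn2real (pvar p x a b) powr (1 / p)))"

definition Vp_bar :: "real \<Rightarrow> (real \<Rightarrow> 'a::real_normed_vector) \<Rightarrow> real \<Rightarrow> real \<Rightarrow> ennreal" where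
  "Vp_bar p x a b = Vp p x a b + ennreal (norm (x a))"

text \<open>The integral int_0^t (x^i - l^i) dk^i is the
  Lebesgue-Stieltjes integral over [0,t] w.r.t. the measure of the nondecreasing
  right-continuous function k^i (extended by k^i_0 = 0 to the left of 0).\<close>
definition SP :: "(real \<Rightarrow> real^'d) \<Rightarrow> (real \<Rightarrow> real^'d) \<Rightarrow> (real \<Rightarrow> real^'d) \<Rightarrow> (real \<Rightarrow> real^'d) \<Rightarrow> bool" where
  "SP l y x k \<longleftrightarrow> cadlag x \<and> cadlag k \<and>
     (\<forall>t\<ge>0. x t = y t + k t \<and> (\<forall>i. l t $ i \<le> x t $ i)) \<and>
     k 0 = 0 \<and>
     (\<forall>i. mono_on {0..} (\<lambda>t. k t $ i)) \<and>
     (\<forall>i. \<forall>t\<ge>0. (LINT s:{0..t}|interval_measure (\<lambda>s. k (max 0 s) $ i). x s $ i - l s $ i) = 0)"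

end

theory Submission
  imports Defs
begin

text \<open>
  In each coordinate the regulator of the Skorokhod problem is the running supremum
  k t = sup {max 0 (l s - y s) | 0 \<le> s \<le> t}: the complementarity condition lets k increase only while x
  touches l. Given two running suprema k, k' of h, h' and a partition, scan the increments of k - k'
  run by run. Each monotone run of k - k' is matched, up to \<epsilon>, by an increment of h - h' between two
  times at which one of the suprema is almost attained, and these witness times increase along the
  scan. Hence every p-variation sum of k - k' is bounded by one of h - h', extended by 0 at a virtual
  time before 0 that accounts for the positive part, so Vp p (k - k') \<le> Vp_bar p (h - h'). Summing over the
  d coordinates and using x = y + k gives both estimates.
\<close>

section \<open>Minkowski's inequality\<close>

lemma powr_convex_nonneg:
  assumes "p \<ge> 1"
  shows "convex_on {0..} (\<lambda>x::real. x powr p)"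
proof (rule convex_onI)
  fix x y t :: real
  assume xy: "x \<in> {0..}" "y \<in> {0..}" and t: "0 < t" "t < 1"
  show "((1 - t) *\<^sub>R x + t *\<^sub>R y) powr p \<le> (1 - t) * x powr p + t * y powr p"
  proof (cases "x = 0 \<or> y = 0")
    case True
    have "c powr p \<le> c" if "0 \<le> c" "c \<le> 1" for c :: real
      using powr_le_one_le[of c p] that assms by (cases "c = 0") auto
    then show ?thesis
      using True xy t assms by (auto simp: powr_mult intro!: mult_right_mono)
  next
    case False
    then show ?thesis
      using convex_onD[OF powr_convex[OF assms], of t x y] xy t by simp
  qed
qed simp

lemma minkowski_ineq:
  fixes x y :: "'i \<Rightarrow> real"
  assumes I: "finite I" and p: "p \<ge> 1"
    and x: "\<And>i. i \<in> I \<Longrightarrow> 0 \<le> x i" and y: "\<And>i. i \<in> I \<Longrightarrow> 0 \<le> y i"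
  shows "(\<Sum>i\<in>I. (x i + y i) powr p) powr (1/p)
    \<le> (\<Sum>i\<in>I. x i powr p) powr (1/p) + (\<Sum>i\<in>I. y i powr p) powr (1/p)"
proof -
  define X where "X = (\<Sum>i\<in>I. x i powr p) powr (1/p)"
  define Y where "Y = (\<Sum>i\<in>I. y i powr p) powr (1/p)"
  have X_powr: "X powr p = (\<Sum>i\<in>I. x i powr p)" and Y_powr: "Y powr p = (\<Sum>i\<in>I. y i powr p)"
    unfolding X_def Y_def using p by (simp_all add: powr_powr sum_nonneg)
  have zero_if: "(\<Sum>i\<in>I. z i powr p) = 0 \<Longrightarrow> i \<in> I \<Longrightarrow> z i = 0"
    if "\<And>i. i \<in> I \<Longrightarrow> 0 \<le> z i" for z :: "'i \<Rightarrow> real" and i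
    using sum_nonneg_eq_0_iff[OF I, of "\<lambda>i. z i powr p"] by auto
  consider "X = 0" | "Y = 0" | "X > 0" "Y > 0"
    unfolding X_def Y_def by fastforce
  then show ?thesis
  proof cases
    case 1
    then have "\<And>i. i \<in> I \<Longrightarrow> x i = 0" using zero_if[OF x] by (simp add: X_def)
    then show ?thesis using 1 by (simp add: X_def)
  next
    case 2
    then have "\<And>i. i \<in> I \<Longrightarrow> y i = 0" using zero_if[OF y] by (simp add: Y_def)
    then show ?thesis using 2 by (simp add: Y_def)
  next
    case 3
    \<comment> \<open>x + y is X + Y times a convex combination of the unit vectors x / X and y / Y\<close>
    define t where "t = Y / (X + Y)"
    have t: "0 \<le> t" "t \<le> 1" "1 - t = X / (X + Y)" using 3 by (auto simp: t_def field_simps)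
    have comb: "(1 - t) * (x i / X) + t * (y i / Y) = (x i + y i) / (X + Y)" for i
      unfolding t(3) using 3 by (simp add: t_def add_divide_distrib)
    have "(\<Sum>i\<in>I. (x i + y i) powr p)
        = (X + Y) powr p * (\<Sum>i\<in>I. ((1 - t) * (x i / X) + t * (y i / Y)) powr p)"
      unfolding comb using 3 x y by (simp add: sum_distrib_left powr_divide)
    also have "\<dots> \<le> (X + Y) powr p * (\<Sum>i\<in>I. (1 - t) * (x i / X) powr p + t * (y i / Y) powr p)"
    proof (intro mult_left_mono sum_mono)
      fix i assume "i \<in> I"
      then show "((1 - t) * (x i / X) + t * (y i / Y)) powr p
          \<le> (1 - t) * (x i / X) powr p + t * (y i / Y) powr p"
        using convex_onD[OF powr_convex_nonneg[OF p], of t "x i / X" "y i / Y"] t(1,2) x y 3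
        by (simp only: real_scaleR_def) simp
    qed simp
    also have "(\<Sum>i\<in>I. (1 - t) * (x i / X) powr p + t * (y i / Y) powr p)
        = (1 - t) * ((\<Sum>i\<in>I. x i powr p) / X powr p) + t * ((\<Sum>i\<in>I. y i powr p) / Y powr p)"
      using 3 x y by (simp add: sum.distrib sum_distrib_left powr_divide sum_divide_distrib)
    also have "(X + Y) powr p * \<dots> = (X + Y) powr p"
      using 3 by (simp flip: X_powr Y_powr)
    finally have "(\<Sum>i\<in>I. (x i + y i) powr p) powr (1/p) \<le> ((X + Y) powr p) powr (1/p)"
      using p by (intro powr_mono2) (auto intro!: sum_nonneg)
    also have "\<dots> = X + Y" using 3 p by (simp add: powr_powr)
    finally show ?thesis by (simp add: X_def Y_def)
  qed
qed

lemma minkowski_ineq_sum: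
  fixes b :: "'i \<Rightarrow> 'j \<Rightarrow> real"
  assumes F: "finite F" and J: "finite J" and p: "p \<ge> 1" and b: "\<And>i j. 0 \<le> b i j"
  shows "(\<Sum>j\<in>J. (\<Sum>i\<in>F. b i j) powr p) powr (1/p) \<le> (\<Sum>i\<in>F. (\<Sum>j\<in>J. b i j powr p) powr (1/p))"
  using F
proof (induction F rule: finite_induct)
  case (insert a F)
  have "(\<Sum>j\<in>J. (\<Sum>i\<in>insert a F. b i j) powr p) powr (1/p)
      = (\<Sum>j\<in>J. (b a j + (\<Sum>i\<in>F. b i j)) powr p) powr (1/p)"
    using insert by simp
  also have "\<dots> \<le> (\<Sum>j\<in>J. b a j powr p) powr (1/p) + (\<Sum>j\<in>J. (\<Sum>i\<in>F. b i j) powr p) powr (1/p)"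
    using J p b by (intro minkowski_ineq) (auto intro: sum_nonneg)
  also have "\<dots> \<le> (\<Sum>i\<in>insert a F. (\<Sum>j\<in>J. b i j powr p) powr (1/p))"
    using insert by simp
  finally show ?case .
qed simp

lemma minkowski_ineq_pair:
  fixes a b r p :: real
  assumes "p \<ge> 1" "0 \<le> a" "0 \<le> b" "0 \<le> r"
  shows "((a + b) powr p + r) powr (1/p) \<le> a + (b powr p + r) powr (1/p)"
  using minkowski_ineq[of UNIV p "\<lambda>i. if i then a else 0" "\<lambda>i. if i then b else r powr (1/p)"] assms
  by (simp add: UNIV_bool powr_powr add.commute)

lemma powr_add_ge_add_powr:
  fixes x y p :: real
  assumes "0 \<le> x" "0 \<le> y" "p \<ge> 1"
  shows "x powr p + y powr p \<le> (x + y) powr p"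
proof (cases "x + y = 0")
  case False
  \<comment> \<open>the graph of z powr p lies below its chord over [0, x + y]\<close>
  have "z powr p \<le> z / (x + y) * (x + y) powr p" if "0 \<le> z" "z \<le> x + y" for z
    using convex_onD[OF powr_convex_nonneg[OF assms(3)], of "z / (x + y)" 0 "x + y"] that assms False
    by simp
  moreover have "x / (x + y) * (x + y) powr p + y / (x + y) * (x + y) powr p = (x + y) powr p"
    using False by (simp flip: distrib_right add_divide_distrib)
  ultimately show ?thesis
    using assms by (smt (verit) add_increasing2)
next
  case True
  then show ?thesis using assms by (simp add: add_nonneg_eq_0_iff)
qed

section \<open>p-variation sums along chains\<close>

definition chain_sum :: "real \<Rightarrow> ('a \<Rightarrow> 'a \<Rightarrow> real) \<Rightarrow> 'a list \<Rightarrow> real" where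
  "chain_sum p \<phi> L = (\<Sum>i<length L - 1. \<phi> (L!i) (L!Suc i) powr p)"

lemma chain_sum_Nil [simp]: "chain_sum p \<phi> [] = 0"
  and chain_sum_single [simp]: "chain_sum p \<phi> [a] = 0"
  by (simp_all add: chain_sum_def)

lemma chain_sum_Cons_Cons: "chain_sum p \<phi> (a # b # L) = \<phi> a b powr p + chain_sum p \<phi> (b # L)"
  unfolding chain_sum_def by (simp only: length_Cons diff_Suc_1 sum.lessThan_Suc_shift) simp

lemma chain_sum_snoc:
  assumes "L \<noteq> []"
  shows "chain_sum p \<phi> (L @ [c]) = chain_sum p \<phi> L + \<phi> (last L) c powr p"
proof -
  obtain n where n: "length L = Suc n" using assms by (cases L) auto
  then have "chain_sum p \<phi> (L @ [c])
      = (\<Sum>i<n. \<phi> (L!i) (L!Suc i) powr p) + \<phi> (L!n) c powr p"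
    unfolding chain_sum_def by (simp add: nth_append)
  then show ?thesis using n assms by (simp add: chain_sum_def last_conv_nth)
qed

lemma chain_sum_nonneg: "0 \<le> chain_sum p \<phi> L"
  unfolding chain_sum_def by (intro sum_nonneg) simp

lemma chain_sum_le_Cons: "chain_sum p \<phi> L \<le> chain_sum p \<phi> (a # L)"
  by (cases L) (simp_all add: chain_sum_Cons_Cons)

lemma chain_sum_le_snoc: "chain_sum p \<phi> L \<le> chain_sum p \<phi> (L @ [c])"
  by (cases "L = []") (simp_all add: chain_sum_snoc)

lemma chain_sum_mono:
  assumes "p \<ge> 0" "\<And>s t. s \<in> set L \<Longrightarrow> t \<in> set L \<Longrightarrow> 0 \<le> \<phi> s t \<and> \<phi> s t \<le> \<psi> s t"
  shows "chain_sum p \<phi> L \<le> chain_sum p \<psi> L"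
  unfolding chain_sum_def using assms by (intro sum_mono powr_mono2) auto

lemma chain_sum_cong:
  assumes "\<And>s t. s \<in> set L \<Longrightarrow> t \<in> set L \<Longrightarrow> \<phi> s t = \<psi> s t"
  shows "chain_sum p \<phi> L = chain_sum p \<psi> L"
  unfolding chain_sum_def using assms by (intro sum.cong refl) simp

lemma chain_sum_const: "chain_sum p (\<lambda>_ _. c) L = real (length L - 1) * c powr p"
  by (simp add: chain_sum_def)

lemma chain_sum_minkowski:
  assumes "p \<ge> 1" "\<And>s t. 0 \<le> \<phi> s t" "\<And>s t. 0 \<le> \<psi> s t"
  shows "chain_sum p (\<lambda>s t. \<phi> s t + \<psi> s t) L powr (1/p)
    \<le> chain_sum p \<phi> L powr (1/p) + chain_sum p \<psi> L powr (1/p)"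
  unfolding chain_sum_def using assms by (intro minkowski_ineq) auto

lemma var_sum_eq_chain_sum: "var_sum p x L = chain_sum p (\<lambda>s t. norm (x t - x s)) L"
  by (simp add: var_sum_def chain_sum_def)

lemma var_sum_nonneg: "0 \<le> var_sum p x L"
  by (simp add: var_sum_eq_chain_sum chain_sum_nonneg)

lemma var_sum_cong:
  assumes "\<And>t. t \<in> set L \<Longrightarrow> x t = y t"
  shows "var_sum p x L = var_sum p y L"
  unfolding var_sum_eq_chain_sum using assms by (intro chain_sum_cong) simp

lemma var_sum_uminus: "var_sum p (\<lambda>t. - x t) L = var_sum p x L"
  by (simp add: var_sum_def norm_minus_commute)

lemma var_sum_add_le:
  fixes x y :: "real \<Rightarrow> 'a::real_normed_vector"
  assumes p: "p \<ge> 1"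
  shows "var_sum p (\<lambda>t. x t + y t) L powr (1/p) \<le> var_sum p x L powr (1/p) + var_sum p y L powr (1/p)"
proof -
  have "var_sum p (\<lambda>t. x t + y t) L \<le> chain_sum p (\<lambda>s t. norm (x t - x s) + norm (y t - y s)) L"
    unfolding var_sum_eq_chain_sum using p
    by (intro chain_sum_mono) (auto intro: order_trans[OF _ norm_triangle_ineq] simp: algebra_simps)
  then have "var_sum p (\<lambda>t. x t + y t) L powr (1/p)
      \<le> chain_sum p (\<lambda>s t. norm (x t - x s) + norm (y t - y s)) L powr (1/p)"
    using p by (intro powr_mono2) (auto simp: var_sum_nonneg)
  also have "\<dots> \<le> var_sum p x L powr (1/p) + var_sum p y L powr (1/p)"
    unfolding var_sum_eq_chain_sum using p by (intro chain_sum_minkowski) auto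
  finally show ?thesis .
qed

lemma var_sum_component_le:
  fixes x :: "real \<Rightarrow> real^'d"
  assumes "p \<ge> 0"
  shows "var_sum p (\<lambda>t. x t $ i) L \<le> var_sum p x L"
  unfolding var_sum_def using assms
  by (intro sum_mono powr_mono2) (auto simp: component_le_norm_cart[of "x _ - x _" i, simplified])

lemma var_sum_le_sum_components:
  fixes x :: "real \<Rightarrow> real^'d"
  assumes p: "p \<ge> 1"
  shows "var_sum p x L powr (1/p) \<le> (\<Sum>i\<in>UNIV. var_sum p (\<lambda>t. x t $ i) L powr (1/p))"
proof -
  let ?\<Delta> = "\<lambda>i j. \<bar>x (L!Suc j) $ i - x (L!j) $ i\<bar>"
  have "var_sum p x L \<le> (\<Sum>j<length L - 1. (\<Sum>i\<in>UNIV. ?\<Delta> i j) powr p)"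
    unfolding var_sum_def using p
    by (intro sum_mono powr_mono2) (auto intro: order_trans[OF norm_le_l1_cart] sum_nonneg)
  then have "var_sum p x L powr (1/p) \<le> (\<Sum>j<length L - 1. (\<Sum>i\<in>UNIV. ?\<Delta> i j) powr p) powr (1/p)"
    using p by (intro powr_mono2) (auto simp: var_sum_nonneg)
  also have "\<dots> \<le> (\<Sum>i\<in>UNIV. (\<Sum>j<length L - 1. ?\<Delta> i j powr p) powr (1/p))"
    using p by (intro minkowski_ineq_sum) auto
  finally show ?thesis by (simp add: var_sum_def)
qed

lemma sorted_wrt_less_hd_le:
  fixes L :: "real list"
  shows "sorted_wrt (<) L \<Longrightarrow> x \<in> set L \<Longrightarrow> hd L \<le> x"
  by (cases L) auto

lemma sorted_wrt_less_le_last: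
  fixes L :: "real list"
  shows "sorted_wrt (<) L \<Longrightarrow> x \<in> set L \<Longrightarrow> x \<le> last L"
  by (induction L rule: rev_induct) (auto simp: sorted_wrt_append)

lemma subdivisionD:
  assumes "subdivision a b ts"
  shows "sorted_wrt (<) ts" "set ts \<subseteq> {a..b}"
  using assms sorted_wrt_less_hd_le[of ts] sorted_wrt_less_le_last[of ts]
  unfolding subdivision_def by auto

lemma var_sum_chain_le_pvar:
  assumes sorted: "sorted_wrt (<) L" and L: "set L \<subseteq> {a..b}"
  shows "ennreal (var_sum p x L) \<le> pvar p x a b"
proof (cases "L = []")
  case False
  define L' where "L' = (if hd L = a then L else a # L)"
  define L'' where "L'' = (if last L' = b then L' else L' @ [b])"
  have hd: "a \<le> hd L" "hd L \<le> b" and last: "last L \<le> b"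
    using L hd_in_set[OF False] last_in_set[OF False] by (meson atLeastAtMost_iff subsetD)+
  have "L' \<noteq> []" "hd L' = a" "last L' = last L"
    using False by (auto simp: L'_def)
  moreover have "sorted_wrt (<) L'"
    using sorted hd sorted_wrt_less_hd_le[OF sorted] by (fastforce simp: L'_def)
  ultimately have "subdivision a b L''"
    using last sorted_wrt_less_le_last[of L']
    by (fastforce simp: L''_def subdivision_def sorted_wrt_append hd_append)
  moreover have "var_sum p x L \<le> var_sum p x L'" "var_sum p x L' \<le> var_sum p x L''"
    unfolding var_sum_eq_chain_sum L''_def L'_def by (simp_all add: chain_sum_le_Cons chain_sum_le_snoc)
  ultimately show ?thesis
    unfolding pvar_def by (intro SUP_upper2[of L''] ennreal_leI) auto
qed (simp add: var_sum_def)

lemma Vp_ge_chain: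
  assumes p: "p > 0" and "sorted_wrt (<) L" "set L \<subseteq> {a..b}"
  shows "ennreal (var_sum p x L powr (1/p)) \<le> Vp p x a b"
proof (cases "pvar p x a b = \<infinity>")
  case False
  have "ennreal (var_sum p x L) \<le> ennreal (enn2real (pvar p x a b))"
    using var_sum_chain_le_pvar[OF assms(2,3)] False by (simp add: ennreal_enn2real_if)
  then have "var_sum p x L \<le> enn2real (pvar p x a b)"
    by simp
  then show ?thesis
    using False p unfolding Vp_def by (auto intro!: ennreal_leI powr_mono2 simp: var_sum_nonneg)
qed (simp add: Vp_def)

lemma Vp_le:
  assumes p: "p > 0" and R: "\<And>ts. subdivision a b ts \<Longrightarrow> ennreal (var_sum p x ts powr (1/p)) \<le> R"
  shows "Vp p x a b \<le> R"
proof (cases R)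
  case (real D)
  have D: "0 \<le> D" by fact
  have "ennreal (var_sum p x ts) \<le> ennreal (D powr p)" if "subdivision a b ts" for ts
  proof (intro ennreal_leI)
    have "var_sum p x ts powr (1/p) \<le> D"
      using R[OF that] D by (simp add: real)
    then have "(var_sum p x ts powr (1/p)) powr p \<le> D powr p"
      using p by (intro powr_mono2) auto
    then show "var_sum p x ts \<le> D powr p"
      using p by (simp add: powr_powr var_sum_nonneg)
  qed
  then have pvar: "pvar p x a b \<le> ennreal (D powr p)"
    unfolding pvar_def by (intro SUP_least) auto
  then have "pvar p x a b \<noteq> \<infinity>" and "enn2real (pvar p x a b) \<le> D powr p"
    using D by (auto simp: top_unique enn2real_leI)
  then show ?thesis
    unfolding Vp_def real using p D powr_mono2[of "1/p" "enn2real (pvar p x a b)" "D powr p"]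
    by (simp add: ennreal_leI powr_powr)
qed simp

lemma Vp_cong:
  assumes "\<And>t. t \<in> {a..b} \<Longrightarrow> x t = y t"
  shows "Vp p x a b = Vp p y a b"
proof -
  have "pvar p x a b = pvar p y a b"
    unfolding pvar_def using assms subdivisionD(2)
    by (intro SUP_cong refl arg_cong[where f = ennreal] var_sum_cong) blast
  then show ?thesis by (simp add: Vp_def)
qed

lemma Vp_uminus: "Vp p (\<lambda>t. - x t) a b = Vp p x a b"
  by (simp add: Vp_def pvar_def var_sum_uminus)

lemma Vp_add_le:
  fixes x y :: "real \<Rightarrow> 'a::real_normed_vector"
  assumes p: "p \<ge> 1"
  shows "Vp p (\<lambda>t. x t + y t) a b \<le> Vp p x a b + Vp p y a b"
proof (rule Vp_le)
  fix ts assume ts: "subdivision a b ts"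
  have "ennreal (var_sum p (\<lambda>t. x t + y t) ts powr (1/p))
      \<le> ennreal (var_sum p x ts powr (1/p)) + ennreal (var_sum p y ts powr (1/p))"
    using var_sum_add_le[OF p] by (simp add: ennreal_plus[symmetric] ennreal_leI del: ennreal_plus)
  also have "\<dots> \<le> Vp p x a b + Vp p y a b"
    using p subdivisionD[OF ts] by (intro add_mono Vp_ge_chain) auto
  finally show "ennreal (var_sum p (\<lambda>t. x t + y t) ts powr (1/p)) \<le> Vp p x a b + Vp p y a b" .
qed (use p in simp)

lemma Vp_component_le:
  fixes x :: "real \<Rightarrow> real^'d"
  assumes p: "p > 0"
  shows "Vp p (\<lambda>t. x t $ i) a b \<le> Vp p x a b"
proof (rule Vp_le[OF p])
  fix ts assume "subdivision a b ts"
  then have "ennreal (var_sum p (\<lambda>t. x t $ i) ts powr (1/p)) \<le> ennreal (var_sum p x ts powr (1/p))"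
    using p var_sum_component_le[of p x i ts]
    by (intro ennreal_leI powr_mono2) (auto simp: var_sum_nonneg)
  also have "\<dots> \<le> Vp p x a b"
    using p subdivisionD[OF \<open>subdivision a b ts\<close>] by (intro Vp_ge_chain) auto
  finally show "ennreal (var_sum p (\<lambda>t. x t $ i) ts powr (1/p)) \<le> Vp p x a b" .
qed

lemma Vp_le_sum_components:
  fixes x :: "real \<Rightarrow> real^'d"
  assumes p: "p \<ge> 1"
  shows "Vp p x a b \<le> (\<Sum>i\<in>UNIV. Vp p (\<lambda>t. x t $ i) a b)"
proof (rule Vp_le)
  fix ts assume ts: "subdivision a b ts"
  have "ennreal (var_sum p x ts powr (1/p)) \<le> (\<Sum>i\<in>UNIV. ennreal (var_sum p (\<lambda>t. x t $ i) ts powr (1/p)))"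
    using var_sum_le_sum_components[OF p, of x ts] by (simp add: ennreal_leI)
  also have "\<dots> \<le> (\<Sum>i\<in>UNIV. Vp p (\<lambda>t. x t $ i) a b)"
    using p subdivisionD[OF ts] by (intro sum_mono Vp_ge_chain) auto
  finally show "ennreal (var_sum p x ts powr (1/p)) \<le> (\<Sum>i\<in>UNIV. Vp p (\<lambda>t. x t $ i) a b)" .
qed (use p in simp)

lemma Vp_bar_diff_le:
  fixes x y :: "real \<Rightarrow> 'a::real_normed_vector"
  assumes "p \<ge> 1"
  shows "Vp_bar p (\<lambda>t. x t - y t) a b \<le> Vp_bar p x a b + Vp_bar p y a b"
proof -
  have "Vp p (\<lambda>t. x t - y t) a b \<le> Vp p x a b + Vp p y a b"
    using Vp_add_le[OF assms, of x "\<lambda>t. - y t"] by (simp add: Vp_uminus)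
  moreover have "ennreal (norm (x a - y a)) \<le> ennreal (norm (x a)) + ennreal (norm (y a))"
    by (simp add: norm_triangle_ineq4 flip: ennreal_plus)
  ultimately have "Vp p (\<lambda>t. x t - y t) a b + ennreal (norm (x a - y a))
      \<le> (Vp p x a b + Vp p y a b) + (ennreal (norm (x a)) + ennreal (norm (y a)))"
    by (rule add_mono)
  then show ?thesis
    unfolding Vp_bar_def by (simp add: ac_simps)
qed

lemma Vp_bar_component_le:
  fixes x :: "real \<Rightarrow> real^'d"
  assumes "p > 0"
  shows "Vp_bar p (\<lambda>t. x t $ i) a b \<le> Vp_bar p x a b"
  unfolding Vp_bar_def using Vp_component_le[OF assms] component_le_norm_cart[of "x a" i]
  by (intro add_mono ennreal_leI) auto

section \<open>Dominating chains\<close>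

text \<open>a is sampled on S. For a direction \<sigma> = \<plusminus>1, the witness P (-\<sigma>) t is an earlier time at which
  \<sigma> * G is within \<epsilon> above \<sigma> * a t, and a strict move of a in direction \<sigma> from s to t forces this
  witness past s. P \<sigma> t plays the same role for -\<sigma>.\<close>
locale chain_selection =
  fixes p \<epsilon> :: real and S :: "real set" and a G :: "real \<Rightarrow> real" and P :: "real \<Rightarrow> real \<Rightarrow> real"
  assumes p: "p \<ge> 1" and eps: "\<epsilon> \<ge> 0"
    and P_le: "\<sigma> \<in> {-1, 1} \<Longrightarrow> t \<in> S \<Longrightarrow> P \<sigma> t \<le> t"
    and P_val: "\<sigma> \<in> {-1, 1} \<Longrightarrow> t \<in> S \<Longrightarrow> \<sigma> * a t - \<epsilon> \<le> \<sigma> * G (P (- \<sigma>) t)"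
    and P_gap: "\<sigma> \<in> {-1, 1} \<Longrightarrow> s \<in> S \<Longrightarrow> t \<in> S \<Longrightarrow> s < t \<Longrightarrow> \<sigma> * a s < \<sigma> * a t \<Longrightarrow> s < P (- \<sigma>) t"
begin

abbreviation "A \<equiv> \<lambda>s t. \<bar>a t - a s\<bar>"
abbreviation "B \<equiv> \<lambda>u v. \<bar>G v - G u\<bar> + 2 * \<epsilon>"
abbreviation "R \<equiv> (\<Union>\<sigma>\<in>{-1, 1}. P \<sigma> ` S)"

lemma chain_extend:
  assumes \<sigma>: "\<sigma> \<in> {-1, 1}" and L: "sorted_wrt (<) L" "L \<noteq> []" "last L = P \<sigma> j"
    and jn: "j \<in> S" "n \<in> S" "j < n" "\<sigma> * a j < \<sigma> * a n"
  shows "sorted_wrt (<) (L @ [P (- \<sigma>) n])"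
    and "chain_sum p B L + (\<sigma> * (a n - a j)) powr p \<le> chain_sum p B (L @ [P (- \<sigma>) n])"
proof -
  have "P \<sigma> j < P (- \<sigma>) n"
    using P_le[OF \<sigma> jn(1)] P_gap[OF \<sigma> jn] by simp
  then show "sorted_wrt (<) (L @ [P (- \<sigma>) n])"
    using L sorted_wrt_less_le_last[OF L(1)] by (fastforce simp: sorted_wrt_append)
  have "- \<sigma> \<in> {-1, 1}" using \<sigma> by auto
  from P_val[OF this jn(1)] P_val[OF \<sigma> jn(2)]
  have "\<sigma> * (a n - a j) \<le> B (P \<sigma> j) (P (- \<sigma>) n)"
    using \<sigma> by (auto simp: algebra_simps)
  then have "(\<sigma> * (a n - a j)) powr p \<le> B (P \<sigma> j) (P (- \<sigma>) n) powr p"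
    using jn(4) p by (intro powr_mono2) (auto simp: algebra_simps)
  then show "chain_sum p B L + (\<sigma> * (a n - a j)) powr p \<le> chain_sum p B (L @ [P (- \<sigma>) n])"
    using L by (simp add: chain_sum_snoc)
qed

text \<open>The state after scanning xs: the B-sum of the chain L dominates the A-sum of all monotone runs of
  a except the last one, which starts at the pivot j and runs in direction \<sigma>.\<close>
definition partial_chain :: "real list \<Rightarrow> real list \<Rightarrow> real \<Rightarrow> real \<Rightarrow> bool" where
  "partial_chain xs L j \<sigma> \<longleftrightarrow> \<sigma> \<in> {-1, 1} \<and> j \<in> set xs \<and> sorted_wrt (<) L \<and> set L \<subseteq> R \<and>
     length L < length xs \<and> 0 \<le> \<sigma> * (a (last xs) - a j) \<and>
     chain_sum p A xs \<le> chain_sum p B L + (\<sigma> * (a (last xs) - a j)) powr p \<and>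
     (if L = [] then a (last xs) = a j else last L = P \<sigma> j \<and> a (last xs) \<noteq> a j)"

lemma partial_chain_snoc:
  assumes inv: "partial_chain xs L j \<sigma>" and xs: "sorted_wrt (<) (xs @ [y])" "set (xs @ [y]) \<subseteq> S"
    and ne: "xs \<noteq> []"
  shows "\<exists>L' j' \<sigma>'. partial_chain (xs @ [y]) L' j' \<sigma>'"
proof -
  define n where "n = last xs"
  note inv' = inv[unfolded partial_chain_def, folded n_def]
  have \<sigma>: "\<sigma> \<in> {-1, 1}" and j: "j \<in> set xs" and run: "0 \<le> \<sigma> * (a n - a j)"
    and bound: "chain_sum p A xs \<le> chain_sum p B L + (\<sigma> * (a n - a j)) powr p"
    using inv' by auto
  have n: "n \<in> set xs" "n < y" using ne xs(1) by (auto simp: n_def sorted_wrt_append)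
  have jn: "j \<le> n" using sorted_wrt_less_le_last[of xs j] xs(1) j by (simp add: n_def sorted_wrt_append)
  have S: "j \<in> S" "n \<in> S" "y \<in> S" using xs(2) j n by auto
  have sum_A: "chain_sum p A (xs @ [y]) = chain_sum p A xs + \<bar>a y - a n\<bar> powr p"
    using ne by (simp add: chain_sum_snoc n_def)
  have abs_sign: "\<bar>x\<bar> = \<tau> * x" if "\<tau> \<in> {-1, 1}" "0 \<le> \<tau> * x" for \<tau> x :: real
    using that by auto
  consider (keep) "0 \<le> \<sigma> * (a y - a n)" "L = [] \<Longrightarrow> a y = a n"
    | (start) "L = []" "a y \<noteq> a n"
    | (switch) "L \<noteq> []" "\<sigma> * (a y - a n) < 0"
    by fastforce
  then show ?thesis
  proof cases
    case keep
    have "chain_sum p A (xs @ [y]) \<le> chain_sum p B L + ((\<sigma> * (a n - a j)) powr p + (\<sigma> * (a y - a n)) powr p)"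
      using sum_A bound abs_sign[OF \<sigma> keep(1)] by simp
    also have "\<dots> \<le> chain_sum p B L + (\<sigma> * (a y - a j)) powr p"
      using powr_add_ge_add_powr[OF run keep(1) p] by (simp add: algebra_simps)
    finally have "partial_chain (xs @ [y]) L j \<sigma>"
      using inv' keep run \<sigma> unfolding partial_chain_def by (auto simp: algebra_simps)
    then show ?thesis by blast
  next
    case start
    define \<tau> where "\<tau> = sgn (a y - a n)"
    have \<tau>: "\<tau> \<in> {-1, 1}" "\<tau> * (a y - a n) = \<bar>a y - a n\<bar>"
      using start(2) by (auto simp: \<tau>_def sgn_if)
    have "a n = a j" "chain_sum p A xs = 0"
      using inv' start(1) bound chain_sum_nonneg[of p A xs] by auto
    then have "partial_chain (xs @ [y]) [P \<tau> j] j \<tau>"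
      using \<tau> j S ne start sum_A unfolding partial_chain_def by auto
    then show ?thesis by blast
  next
    case switch
    have "last L = P \<sigma> j" "a n \<noteq> a j" using inv' switch(1) by auto
    then have up: "\<sigma> * a j < \<sigma> * a n" and "j < n"
      using run jn \<sigma> by (auto simp: algebra_simps le_less)
    note ext = chain_extend[OF \<sigma> _ switch(1) \<open>last L = P \<sigma> j\<close> S(1,2) \<open>j < n\<close> up]
    have "- \<sigma> \<in> {-1, 1}" using \<sigma> by auto
    have "chain_sum p A (xs @ [y]) \<le> chain_sum p B L + (\<sigma> * (a n - a j)) powr p + (- \<sigma> * (a y - a n)) powr p"
      using sum_A bound abs_sign[OF \<open>- \<sigma> \<in> {-1, 1}\<close>] switch(2) by simp
    also have "\<dots> \<le> chain_sum p B (L @ [P (- \<sigma>) n]) + (- \<sigma> * (a y - a n)) powr p"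
      using ext(2) inv' by (simp add: partial_chain_def)
    finally have "partial_chain (xs @ [y]) (L @ [P (- \<sigma>) n]) n (- \<sigma>)"
      using inv' ext(1) \<open>- \<sigma> \<in> {-1, 1}\<close> switch n S unfolding partial_chain_def by auto
    then show ?thesis by blast
  qed
qed

lemma partial_chain_exists:
  "xs \<noteq> [] \<Longrightarrow> sorted_wrt (<) xs \<Longrightarrow> set xs \<subseteq> S \<Longrightarrow> \<exists>L j \<sigma>. partial_chain xs L j \<sigma>"
proof (induction xs rule: rev_induct)
  case (snoc y xs)
  show ?case
  proof (cases "xs = []")
    case True
    then have "partial_chain (xs @ [y]) [] y 1" by (simp add: partial_chain_def)
    then show ?thesis by blast
  next
    case False
    with snoc obtain L j \<sigma> where "partial_chain xs L j \<sigma>" by (auto simp: sorted_wrt_append)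
    then show ?thesis using partial_chain_snoc snoc.prems False by blast
  qed
qed simp

lemma exists_dominating_chain:
  assumes "sorted_wrt (<) ts" "set ts \<subseteq> S"
  shows "\<exists>L. sorted_wrt (<) L \<and> set L \<subseteq> R \<and> length L \<le> length ts \<and> chain_sum p A ts \<le> chain_sum p B L"
proof (cases "ts = []")
  case False
  then obtain L j \<sigma> where inv: "partial_chain ts L j \<sigma>"
    using partial_chain_exists assms by blast
  define n where "n = last ts"
  note inv' = inv[unfolded partial_chain_def, folded n_def]
  have n: "n \<in> S" "j \<le> n"
    using False assms sorted_wrt_less_le_last[OF assms(1)] inv' by (auto simp: n_def)
  show ?thesis
  proof (cases "L = []")
    case True
    then show ?thesis using inv' chain_sum_nonneg[of p A ts] by (intro exI[of _ "[]"]) auto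
  next
    case L: False
    have \<sigma>: "\<sigma> \<in> {-1, 1}" and "last L = P \<sigma> j" "a n \<noteq> a j" "j \<in> S" using inv' L assms by auto
    then have up: "\<sigma> * a j < \<sigma> * a n" and "j < n"
      using inv' n \<sigma> by (auto simp: algebra_simps le_less)
    note ext = chain_extend[OF \<sigma> _ L \<open>last L = P \<sigma> j\<close> \<open>j \<in> S\<close> n(1) \<open>j < n\<close> up]
    have "P (- \<sigma>) n \<in> R" using \<sigma> n(1) by force
    then show ?thesis
      using inv' ext by (intro exI[of _ "L @ [P (- \<sigma>) n]"]) auto
  qed
qed simp

end

section \<open>Running suprema\<close>

definition running_sup :: "(real \<Rightarrow> real) \<Rightarrow> (real \<Rightarrow> real) \<Rightarrow> bool" where
  "running_sup h k \<longleftrightarrow> (\<forall>t\<ge>0. 0 \<le> k t \<and> (\<forall>u\<in>{0..t}. h u \<le> k t) \<and>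
     (\<forall>\<epsilon>>0. k t < \<epsilon> \<or> (\<exists>u\<in>{0..t}. k t - \<epsilon> < h u)))"

lemma running_supD:
  assumes "running_sup h k" "0 \<le> t"
  shows "0 \<le> k t" "u \<in> {0..t} \<Longrightarrow> h u \<le> k t" "\<epsilon> > 0 \<Longrightarrow> k t < \<epsilon> \<or> (\<exists>u\<in>{0..t}. k t - \<epsilon> < h u)"
  using assms by (auto simp: running_sup_def)

lemma running_sup_mono:
  assumes k: "running_sup h k" and st: "0 \<le> s" "s \<le> t"
  shows "k s \<le> k t"
proof (rule ccontr)
  assume "\<not> k s \<le> k t"
  then have "k s - k t > 0" by simp
  from running_supD(3)[OF k st(1) this] show False
    using running_supD(1,2)[OF k, of t] st by fastforce
qed

text \<open>A time u \<le> t at which h is within \<epsilon> of k t; the value -1 stands for a virtual time before 0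
  at which h vanishes, used when k t itself is below \<epsilon>.\<close>
definition sup_witness :: "(real \<Rightarrow> real) \<Rightarrow> (real \<Rightarrow> real) \<Rightarrow> real \<Rightarrow> real \<Rightarrow> real" where
  "sup_witness h k \<epsilon> t = (if k t < \<epsilon> then -1 else SOME u. u \<in> {0..t} \<and> k t - \<epsilon> < h u)"

lemma sup_witnessD:
  assumes k: "running_sup h k" and k': "running_sup h' k'" and \<epsilon>: "\<epsilon> > 0" and t: "0 \<le> t"
  defines "w \<equiv> sup_witness h k \<epsilon> t"
  shows "w \<in> insert (-1) {0..t}"
    and "k t - k' t - \<epsilon> \<le> (if w < 0 then 0 else h w - h' w)"
    and "0 \<le> s \<Longrightarrow> s < t \<Longrightarrow> \<epsilon> < (k t - k' t) - (k s - k' s) \<Longrightarrow> s < w"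
proof -
  have w: "w \<in> {0..t} \<and> k t - \<epsilon> < h w" if "\<epsilon> \<le> k t"
  proof -
    have "\<exists>u. u \<in> {0..t} \<and> k t - \<epsilon> < h u"
      using running_supD(3)[OF k t \<epsilon>] that by auto
    from someI_ex[OF this] show ?thesis
      unfolding w_def sup_witness_def using that by simp
  qed
  show "w \<in> insert (-1) {0..t}"
    using w by (cases "\<epsilon> \<le> k t") (auto simp: w_def sup_witness_def)
  show "k t - k' t - \<epsilon> \<le> (if w < 0 then 0 else h w - h' w)"
  proof (cases "\<epsilon> \<le> k t")
    case True
    then have "h' w \<le> k' t"
      using w running_supD(2)[OF k' t] by auto
    then show ?thesis using w True by auto
  next
    case False
    then show ?thesis
      using running_supD(1)[OF k' t] by (simp add: w_def sup_witness_def)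
  qed
  assume s: "0 \<le> s" "s < t" and gap: "\<epsilon> < (k t - k' t) - (k s - k' s)"
  then have "\<epsilon> + k s < k t"
    using running_sup_mono[OF k' s(1), of t] by simp
  then have "\<epsilon> \<le> k t" and "k s < h w"
    using w running_supD(1)[OF k s(1)] by fastforce+
  then show "s < w"
    using w running_supD(2)[OF k s(1), of w] running_supD(2)[OF k t] by (meson atLeastAtMost_iff not_less)
qed

lemma chain_sum_zero_extension_le_Vp_bar:
  fixes g :: "real \<Rightarrow> real"
  assumes p: "p \<ge> 1" and L: "sorted_wrt (<) L" "set L \<subseteq> insert (-1) {0..T}"
  defines "G \<equiv> \<lambda>s. if s < 0 then 0 else g s"
  shows "ennreal (chain_sum p (\<lambda>u v. \<bar>G v - G u\<bar>) L powr (1/p)) \<le> Vp_bar p g 0 T"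
proof -
  have chain: "ennreal (chain_sum p (\<lambda>u v. \<bar>G v - G u\<bar>) M powr (1/p)) \<le> Vp p g 0 T"
    if "sorted_wrt (<) M" "set M \<subseteq> {0..T}" for M
  proof -
    have "chain_sum p (\<lambda>u v. \<bar>G v - G u\<bar>) M = var_sum p g M"
      unfolding var_sum_eq_chain_sum G_def using that by (intro chain_sum_cong) auto
    then show ?thesis using Vp_ge_chain[OF _ that, of p g] p by simp
  qed
  consider "set L \<subseteq> {0..T}" | r where "L = -1 # r" "sorted_wrt (<) r" "set r \<subseteq> {0..T}"
  proof (cases L)
    case (Cons c r)
    have r: "sorted_wrt (<) r" "\<forall>u\<in>set r. c < u" and c: "c \<in> insert (-1) {0..T}"
      using L Cons by auto
    have "u \<in> {0..T}" if "u \<in> set r" for u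
      using that r(2) c L(2) Cons by force
    then have r': "set r \<subseteq> {0..T}" by blast
    show ?thesis
    proof (cases "c < 0")
      case True
      then have "L = -1 # r" using L(2) Cons by auto
      then show ?thesis using that(2) r r' by blast
    next
      case False
      then have "set L \<subseteq> {0..T}" using c r' Cons by auto
      then show ?thesis by (rule that(1))
    qed
  qed (use that in simp)
  then show ?thesis
  proof cases
    case 1
    then show ?thesis using chain[OF L(1)] unfolding Vp_bar_def by (simp add: add_increasing2)
  next
    case (2 r)
    show ?thesis
    proof (cases r)
      case (Cons c r')
      \<comment> \<open>the first step, from the virtual time to c, is split at time 0 by Minkowski's inequality\<close>
      define M where "M = (if c = 0 then r else 0 # r)"
      have c: "0 \<le> c" using 2 Cons by simp
      have "sorted_wrt (<) M"
        using 2 Cons c by (cases "c = 0") (auto simp: M_def intro: le_less_trans)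
      moreover have "set M \<subseteq> {0..T}"
        using 2 Cons by (auto simp: M_def)
      ultimately have chain_M: "ennreal (chain_sum p (\<lambda>u v. \<bar>G v - G u\<bar>) M powr (1/p)) \<le> Vp p g 0 T"
        by (rule chain)
      define R where "R = chain_sum p (\<lambda>u v. \<bar>G v - G u\<bar>) r"
      have sum_L: "chain_sum p (\<lambda>u v. \<bar>G v - G u\<bar>) L = \<bar>g c\<bar> powr p + R"
        using 2 Cons c by (simp add: chain_sum_Cons_Cons R_def G_def)
      have sum_M: "chain_sum p (\<lambda>u v. \<bar>G v - G u\<bar>) M = \<bar>g c - g 0\<bar> powr p + R"
        using Cons c by (simp add: M_def R_def chain_sum_Cons_Cons G_def)
      have "(\<bar>g c\<bar> powr p + R) powr (1/p) \<le> ((\<bar>g 0\<bar> + \<bar>g c - g 0\<bar>) powr p + R) powr (1/p)"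
        using p by (intro powr_mono2 add_right_mono) (auto simp: R_def chain_sum_nonneg)
      also have "\<dots> \<le> \<bar>g 0\<bar> + (\<bar>g c - g 0\<bar> powr p + R) powr (1/p)"
        using p by (intro minkowski_ineq_pair) (auto simp: R_def chain_sum_nonneg)
      finally have "ennreal (chain_sum p (\<lambda>u v. \<bar>G v - G u\<bar>) L powr (1/p))
          \<le> ennreal \<bar>g 0\<bar> + ennreal (chain_sum p (\<lambda>u v. \<bar>G v - G u\<bar>) M powr (1/p))"
        unfolding sum_L sum_M by (simp add: ennreal_leI flip: ennreal_plus)
      also have "\<dots> \<le> Vp_bar p g 0 T"
        using chain_M unfolding Vp_bar_def by (simp add: add.commute add_left_mono)
      finally show ?thesis .
    qed (use 2 in simp)
  qed
qed

lemma chain_selection_running_sup: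
  fixes h h' k k' :: "real \<Rightarrow> real"
  assumes p: "p \<ge> 1" and k: "running_sup h k" and k': "running_sup h' k'" and \<epsilon>: "\<epsilon> > 0"
    and S: "S \<subseteq> {0..}"
    and gap: "\<And>s t. s \<in> S \<Longrightarrow> t \<in> S \<Longrightarrow> k s - k' s \<noteq> k t - k' t
      \<Longrightarrow> \<epsilon> < \<bar>(k t - k' t) - (k s - k' s)\<bar>"
  shows "chain_selection p \<epsilon> S (\<lambda>t. k t - k' t) (\<lambda>s. if s < 0 then 0 else h s - h' s)
    (\<lambda>\<sigma>. if \<sigma> = 1 then sup_witness h' k' \<epsilon> else sup_witness h k \<epsilon>)"
proof
  \<comment> \<open>the case \<sigma> = -1 is the case \<sigma> = 1 with the two problems exchanged\<close>
  note wit = sup_witnessD[OF k k' \<epsilon>] and wit' = sup_witnessD[OF k' k \<epsilon>]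
  fix \<sigma> t :: real assume \<sigma>: "\<sigma> \<in> {-1, 1}" and t: "t \<in> S"
  then have t0: "0 \<le> t" using S by auto
  show "(if \<sigma> = 1 then sup_witness h' k' \<epsilon> else sup_witness h k \<epsilon>) t \<le> t"
    using wit(1)[OF t0] wit'(1)[OF t0] t0 by auto
  show "\<sigma> * (k t - k' t) - \<epsilon>
      \<le> \<sigma> * (if (if - \<sigma> = 1 then sup_witness h' k' \<epsilon> else sup_witness h k \<epsilon>) t < 0 then 0
          else h ((if - \<sigma> = 1 then sup_witness h' k' \<epsilon> else sup_witness h k \<epsilon>) t)
            - h' ((if - \<sigma> = 1 then sup_witness h' k' \<epsilon> else sup_witness h k \<epsilon>) t))"
    using \<sigma> wit(2)[OF t0] wit'(2)[OF t0] by auto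
  fix s assume "s \<in> S" "s < t" "\<sigma> * (k s - k' s) < \<sigma> * (k t - k' t)"
  then show "s < (if - \<sigma> = 1 then sup_witness h' k' \<epsilon> else sup_witness h k \<epsilon>) t"
    using \<sigma> t S gap[of s t] wit(3)[OF t0, of s] wit'(3)[OF t0, of s] by auto
qed (use p \<epsilon> in auto)

lemma var_sum_running_sup_diff_le_eps:
  fixes h h' k k' :: "real \<Rightarrow> real"
  assumes p: "p \<ge> 1" and k: "running_sup h k" and k': "running_sup h' k'" and \<epsilon>: "\<epsilon> > 0"
    and ts: "sorted_wrt (<) ts" "set ts \<subseteq> {0..T}"
    and gap: "\<And>s t. s \<in> set ts \<Longrightarrow> t \<in> set ts \<Longrightarrow> k s - k' s \<noteq> k t - k' t
      \<Longrightarrow> \<epsilon> < \<bar>(k t - k' t) - (k s - k' s)\<bar>"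
  shows "ennreal (var_sum p (\<lambda>t. k t - k' t) ts powr (1/p))
    \<le> Vp_bar p (\<lambda>t. h t - h' t) 0 T + ennreal (2 * \<epsilon> * real (length ts) powr (1/p))"
proof -
  define a where "a = (\<lambda>t. k t - k' t)"
  define G where "G = (\<lambda>s. if s < 0 then 0 else h s - h' s)"
  define P where "P = (\<lambda>\<sigma>::real. if \<sigma> = 1 then sup_witness h' k' \<epsilon> else sup_witness h k \<epsilon>)"
  have "chain_selection p \<epsilon> (set ts) a G P"
    unfolding a_def G_def P_def using ts(2) gap by (intro chain_selection_running_sup[OF p k k' \<epsilon>]) auto
  from chain_selection.exists_dominating_chain[OF this ts(1) subset_refl]
  obtain L where L: "sorted_wrt (<) L" "set L \<subseteq> (\<Union>\<sigma>\<in>{-1, 1}. P \<sigma> ` set ts)"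
    "length L \<le> length ts" "var_sum p a ts \<le> chain_sum p (\<lambda>u v. \<bar>G v - G u\<bar> + 2 * \<epsilon>) L"
    by (auto simp: var_sum_eq_chain_sum)
  have "set L \<subseteq> insert (-1) {0..T}"
  proof
    fix u assume "u \<in> set L"
    then obtain \<sigma> t where "u = P \<sigma> t" "t \<in> set ts" using L(2) by blast
    moreover have "0 \<le> t" "t \<le> T" using ts(2) \<open>t \<in> set ts\<close> by auto
    ultimately show "u \<in> insert (-1) {0..T}"
      using sup_witnessD(1)[OF k k' \<epsilon>, of t] sup_witnessD(1)[OF k' k \<epsilon>, of t] by (auto simp: P_def)
  qed
  from chain_sum_zero_extension_le_Vp_bar[OF p L(1) this]
  have chain: "ennreal (chain_sum p (\<lambda>u v. \<bar>G v - G u\<bar>) L powr (1/p)) \<le> Vp_bar p (\<lambda>t. h t - h' t) 0 T"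
    by (simp add: G_def)
  have "chain_sum p (\<lambda>_ _. 2 * \<epsilon>) L powr (1/p) \<le> (real (length ts) * (2 * \<epsilon>) powr p) powr (1/p)"
    using L(3) p \<epsilon> by (auto simp: chain_sum_const intro!: powr_mono2 mult_right_mono)
  also have "\<dots> = 2 * \<epsilon> * real (length ts) powr (1/p)"
    using p \<epsilon> by (simp add: powr_mult powr_powr)
  finally have const: "chain_sum p (\<lambda>_ _. 2 * \<epsilon>) L powr (1/p) \<le> 2 * \<epsilon> * real (length ts) powr (1/p)" .
  have "var_sum p a ts powr (1/p) \<le> chain_sum p (\<lambda>u v. \<bar>G v - G u\<bar> + 2 * \<epsilon>) L powr (1/p)"
    using L(4) p by (intro powr_mono2) (auto simp: var_sum_nonneg)
  also have "\<dots> \<le> chain_sum p (\<lambda>u v. \<bar>G v - G u\<bar>) L powr (1/p) + chain_sum p (\<lambda>_ _. 2 * \<epsilon>) L powr (1/p)"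
    using p \<epsilon> by (intro chain_sum_minkowski) auto
  finally have "ennreal (var_sum p a ts powr (1/p))
      \<le> ennreal (chain_sum p (\<lambda>u v. \<bar>G v - G u\<bar>) L powr (1/p) + 2 * \<epsilon> * real (length ts) powr (1/p))"
    using const by (intro ennreal_leI) linarith
  also have "\<dots> = ennreal (chain_sum p (\<lambda>u v. \<bar>G v - G u\<bar>) L powr (1/p)) + ennreal (2 * \<epsilon> * real (length ts) powr (1/p))"
    using \<epsilon> by (intro ennreal_plus) auto
  also have "\<dots> \<le> Vp_bar p (\<lambda>t. h t - h' t) 0 T + ennreal (2 * \<epsilon> * real (length ts) powr (1/p))"
    using chain by (rule add_right_mono)
  finally show ?thesis by (simp add: a_def)
qed

theorem Vp_running_sup_diff_le:
  fixes h h' k k' :: "real \<Rightarrow> real"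
  assumes p: "p \<ge> 1" and k: "running_sup h k" and k': "running_sup h' k'"
  shows "Vp p (\<lambda>t. k t - k' t) 0 T \<le> Vp_bar p (\<lambda>t. h t - h' t) 0 T"
proof (rule Vp_le)
  fix ts assume ts: "subdivision 0 T ts"
  define a where "a = (\<lambda>t. k t - k' t)"
  \<comment> \<open>for \<epsilon> below the smallest nonzero increment of k - k' on ts, every strict move exceeds \<epsilon>\<close>
  define \<delta> where "\<delta> = Min (insert 1 ((\<lambda>(s, t). \<bar>a t - a s\<bar>) ` {(s, t) \<in> set ts \<times> set ts. a s \<noteq> a t}))"
  have fin: "finite {(s, t) \<in> set ts \<times> set ts. a s \<noteq> a t}"
    by (rule finite_subset[of _ "set ts \<times> set ts"]) auto
  have \<delta>: "0 < \<delta>" unfolding \<delta>_def using fin by auto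
  have gap: "\<delta> \<le> \<bar>a t - a s\<bar>" if "s \<in> set ts" "t \<in> set ts" "a s \<noteq> a t" for s t
    unfolding \<delta>_def using fin that by (intro Min_le) auto
  have bound: "ennreal (var_sum p a ts powr (1/p))
      \<le> Vp_bar p (\<lambda>t. h t - h' t) 0 T + ennreal (2 * \<epsilon> * real (length ts) powr (1/p))"
    if "0 < \<epsilon>" "\<epsilon> < \<delta>" for \<epsilon>
    unfolding a_def using subdivisionD[OF ts] gap that
    by (intro var_sum_running_sup_diff_le_eps[OF p k k']) (force simp: a_def)+
  show "ennreal (var_sum p a ts powr (1/p)) \<le> Vp_bar p (\<lambda>t. h t - h' t) 0 T"
  proof (cases "Vp_bar p (\<lambda>t. h t - h' t) 0 T")
    case (real D)
    have "((\<lambda>\<epsilon>. D + 2 * \<epsilon> * real (length ts) powr (1/p)) \<longlongrightarrow> D) (at_right 0)"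
      by (auto intro!: tendsto_eq_intros)
    moreover have "\<forall>\<^sub>F \<epsilon> in at_right 0. var_sum p a ts powr (1/p) \<le> D + 2 * \<epsilon> * real (length ts) powr (1/p)"
      unfolding eventually_at_right_field
    proof (intro exI[of _ \<delta>] conjI allI impI)
      fix \<epsilon> :: real assume "0 < \<epsilon>" "\<epsilon> < \<delta>"
      then show "var_sum p a ts powr (1/p) \<le> D + 2 * \<epsilon> * real (length ts) powr (1/p)"
        using bound[of \<epsilon>] real by (simp flip: ennreal_plus)
    qed (rule \<delta>)
    ultimately have "var_sum p a ts powr (1/p) \<le> D"
      by (intro tendsto_lowerbound) auto
    then show ?thesis using real by (simp add: ennreal_leI)
  qed simp
qed (use p in simp)

section \<open>The Skorokhod problem\<close>

lemma cadlag_bounded: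
  fixes f :: "real \<Rightarrow> 'a::real_normed_vector"
  assumes "cadlag f"
  obtains B where "\<And>s. s \<in> {0..t} \<Longrightarrow> norm (f s) \<le> B"
proof -
  have "\<exists>d B. 0 < d \<and> (\<forall>r\<in>{0..t}. dist r c < d \<longrightarrow> norm (f r) \<le> B)" if c: "c \<in> {0..t}" for c
  proof -
    have bound_near: "\<forall>\<^sub>F r in F. norm (f r) \<le> norm L + 1" if "(f \<longlongrightarrow> L) F" for L F
      using tendstoD[OF that zero_less_one]
      by eventually_elim (metis dist_norm norm_triangle_sub add_le_cancel_left less_imp_le order_trans)
    obtain L :: 'a where left: "\<forall>\<^sub>F r in at_left c. r \<in> {0..t} \<longrightarrow> norm (f r) \<le> norm L + 1"
    proof (cases "c = 0")
      case True
      have "\<forall>\<^sub>F r in at_left c. r \<notin> {0..t}"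
        unfolding True eventually_at_left_field by (intro exI[of _ "-1"]) auto
      then show ?thesis by (rule that[of 0, OF eventually_mono]) auto
    next
      case False
      then obtain L where "(f \<longlongrightarrow> L) (at_left c)" using assms c unfolding cadlag_def by force
      from bound_near[OF this] show ?thesis by (rule that[of L, OF eventually_mono]) simp
    qed
    have "(f \<longlongrightarrow> f c) (at_right c)" using assms c unfolding cadlag_def by auto
    from bound_near[OF this] have "\<forall>\<^sub>F r in at_right c. r \<in> {0..t} \<longrightarrow> norm (f r) \<le> norm (f c) + 1"
      by (rule eventually_mono) simp
    with left have "\<forall>\<^sub>F r in at c. r \<in> {0..t} \<longrightarrow> norm (f r) \<le> max (norm L + 1) (norm (f c) + 1)"
      unfolding eventually_at_split by (auto elim!: eventually_mono)
    then obtain d where "0 < d" "\<And>r. r \<noteq> c \<Longrightarrow> dist r c < d \<Longrightarrow> r \<in> {0..t} \<Longrightarrow>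
        norm (f r) \<le> max (norm L + 1) (norm (f c) + 1)"
      unfolding eventually_at by auto
    then have "\<forall>r\<in>{0..t}. dist r c < d \<longrightarrow> norm (f r) \<le> max (norm L + 1) (norm (f c) + 1)"
      by (metis max.cobounded2 add_increasing2 zero_le_one order_trans order_refl)
    with \<open>0 < d\<close> show ?thesis by blast
  qed
  then obtain d B where d: "\<And>c. c \<in> {0..t} \<Longrightarrow> 0 < d c \<and> (\<forall>r\<in>{0..t}. dist r c < d c \<longrightarrow> norm (f r) \<le> B c)"
    by metis
  obtain C where C: "C \<subseteq> {0..t}" "finite C" "{0..t} \<subseteq> (\<Union>c\<in>C. ball c (d c))"
  proof (rule compactE_image[of "{0..t}" "{0..t}" "\<lambda>c. ball c (d c)"])
    show "{0..t} \<subseteq> (\<Union>c\<in>{0..t}. ball c (d c))" using d by force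
  qed auto
  show ?thesis
  proof (rule that)
    fix s assume s: "s \<in> {0..t}"
    then obtain c where c: "c \<in> C" "dist s c < d c" using C by (auto simp: dist_commute)
    then have "norm (f s) \<le> \<bar>B c\<bar>"
      using d[of c] C(1) s by (auto simp: subset_iff)
    also have "\<dots> \<le> (\<Sum>c\<in>C. \<bar>B c\<bar>)"
      using C(2) c(1) by (intro member_le_sum) auto
    finally show "norm (f s) \<le> (\<Sum>c\<in>C. \<bar>B c\<bar>)" .
  qed
qed

lemma borel_measurable_right_continuous_on_Icc:
  fixes \<phi> :: "real \<Rightarrow> real"
  assumes rc: "\<And>s. 0 \<le> s \<Longrightarrow> (\<phi> \<longlongrightarrow> \<phi> s) (at_right s)"
  shows "(\<lambda>s. indicator {0..t} s * \<phi> s) \<in> borel_measurable borel"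
proof (rule borel_measurable_LIMSEQ_metric)
  \<comment> \<open>approximate from the right by the grid points of mesh 1/(n+1), which take countably many values\<close>
  define u where "u = (\<lambda>n s. min t (real_of_int \<lceil>real (Suc n) * s\<rceil> / real (Suc n)))"
  show "(\<lambda>s. indicator {0..t} s * \<phi> (u n s)) \<in> borel_measurable borel" for n
  proof -
    have grid: "(\<lambda>s. \<lceil>real (Suc n) * s\<rceil>) \<in> measurable borel (count_space UNIV)"
      by (rule measurable_compose[OF _ measurable_real_ceiling]) simp
    have "(\<lambda>s. indicator {0..t} s * \<phi> (min t (real_of_int i / real (Suc n)))) \<in> borel_measurable borel"
      for i :: int
      by simp
    from measurable_compose_countable'[OF this grid] show ?thesis
      unfolding u_def by simp
  qed
  fix s :: real
  show "(\<lambda>n. indicator {0..t} s * \<phi> (u n s)) \<longlonglongrightarrow> indicator {0..t} s * \<phi> s"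
  proof (cases "s \<in> {0..t}")
    case True
    have lo: "s \<le> u n s" for n
    proof -
      have "real (Suc n) * s \<le> real_of_int \<lceil>real (Suc n) * s\<rceil>" by simp
      then show ?thesis using True by (simp add: u_def field_simps)
    qed
    have hi: "u n s \<le> s + 1 / real (Suc n)" for n
    proof -
      have "real_of_int \<lceil>real (Suc n) * s\<rceil> / real (Suc n) \<le> (real (Suc n) * s + 1) / real (Suc n)"
        by (intro divide_right_mono) auto
      also have "\<dots> = s + 1 / real (Suc n)"
        by (simp add: add_divide_distrib)
      finally show ?thesis by (simp add: u_def)
    qed
    have "(\<lambda>n. s + 1 / real (Suc n)) \<longlonglongrightarrow> s"
      using tendsto_add[OF tendsto_const LIMSEQ_Suc[OF lim_inverse_n'], of s] by (simp add: inverse_eq_divide)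
    then have "(\<lambda>n. u n s) \<longlonglongrightarrow> s"
      by (rule tendsto_sandwich[rotated 2, OF tendsto_const]) (use lo hi in \<open>simp_all only: always_eventually eventually_True\<close>)
    moreover have "continuous (at s within {s..}) \<phi>"
      using rc True by (simp add: continuous_within at_within_Ici_at_right)
    ultimately have "(\<lambda>n. \<phi> (u n s)) \<longlonglongrightarrow> \<phi> s"
      by (rule continuous_within_tendsto_compose'[rotated 2]) (simp add: lo)
    then show ?thesis using True by simp
  qed simp
qed

lemma first_passage_time:
  fixes K :: "real \<Rightarrow> real"
  assumes mono: "\<And>s r. 0 \<le> s \<Longrightarrow> s \<le> r \<Longrightarrow> K s \<le> K r"
    and rc: "\<And>s. 0 \<le> s \<Longrightarrow> (K \<longlongrightarrow> K s) (at_right s)"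
    and t: "0 \<le> t" "c < K t"
  obtains a where "0 \<le> a" "a \<le> t" "\<And>s. 0 \<le> s \<Longrightarrow> s < a \<Longrightarrow> K s \<le> c" "\<And>s. a \<le> s \<Longrightarrow> s \<le> t \<Longrightarrow> c \<le> K s"
proof
  define E where "E = {s \<in> {0..t}. c < K s}"
  have tE: "t \<in> E" using t by (simp add: E_def)
  have bdd: "bdd_below E" by (rule bdd_belowI[of _ 0]) (simp add: E_def)
  show a0: "0 \<le> Inf E" and aT: "Inf E \<le> t"
    using tE bdd by (auto intro!: cInf_greatest cInf_lower simp: E_def)
  show "K s \<le> c" if "0 \<le> s" "s < Inf E" for s
  proof -
    have "s \<notin> E" using that bdd cInf_lower[of s E] by force
    then show ?thesis using that aT by (auto simp: E_def)
  qed
  have above: "c \<le> K r" if "Inf E < r" "r \<le> t" for r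
  proof -
    obtain e where "e \<in> E" "e < r" using \<open>Inf E < r\<close> cInf_less_iff[OF _ bdd] tE by blast
    then show ?thesis using mono[of e r] by (auto simp: E_def)
  qed
  show "c \<le> K s" if "Inf E \<le> s" "s \<le> t" for s
  proof (cases "Inf E < s \<or> s = t")
    case True
    then show ?thesis using above[of s] tE that by (auto simp: E_def)
  next
    case False
    then have "s = Inf E" "Inf E < t" using that by auto
    have "\<forall>\<^sub>F r in at_right (Inf E). c \<le> K r"
      unfolding eventually_at_right_field using above \<open>Inf E < t\<close> by (intro exI[of _ t]) auto
    from tendsto_lowerbound[OF rc[OF a0] this] show ?thesis using \<open>s = Inf E\<close> by simp
  qed
qed

lemma interval_measure_Icc_ge:
  fixes F :: "real \<Rightarrow> real"
  assumes mono: "\<And>x y. x \<le> y \<Longrightarrow> F x \<le> F y" and rc: "\<And>x. continuous (at_right x) F"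
    and at: "a \<le> t" and below: "\<And>s. s < a \<Longrightarrow> F s \<le> c"
  shows "ennreal (F t - c) \<le> emeasure (interval_measure F) {a..t}"
proof -
  define A where "A = (\<lambda>n. {a - 1 / real (Suc n) <.. t})"
  have A: "emeasure (interval_measure F) (A n) = ennreal (F t - F (a - 1 / real (Suc n)))" for n
    unfolding A_def using at
    by (intro emeasure_interval_measure_Ioc mono rc) (auto intro: order_trans[of _ a])
  have "decseq A"
  proof (rule decseq_SucI)
    fix n
    have "1 / real (Suc (Suc n)) \<le> 1 / real (Suc n)" by (intro divide_left_mono) auto
    then show "A (Suc n) \<subseteq> A n" by (auto simp: A_def)
  qed
  moreover have "(\<Inter>n. A n) = {a..t}"
  proof (intro equalityI subsetI)
    fix s assume s: "s \<in> (\<Inter>n. A n)"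
    have "a \<le> s"
    proof (rule ccontr)
      assume "\<not> a \<le> s"
      then obtain n where "1 / real (Suc n) < a - s" using reals_Archimedean[of "a - s"]
        by (auto simp: inverse_eq_divide)
      moreover have "s \<in> A n" using s by blast
      ultimately show False by (auto simp: A_def)
    qed
    then show "s \<in> {a..t}" using s by (auto simp: A_def)
  qed (auto simp: A_def intro: less_le_trans[of _ a])
  moreover have "range A \<subseteq> sets (interval_measure F)" by (auto simp: A_def)
  ultimately have "(\<lambda>n. emeasure (interval_measure F) (A n)) \<longlonglongrightarrow> emeasure (interval_measure F) {a..t}"
    using Lim_emeasure_decseq[of A "interval_measure F"] A by simp
  moreover have "ennreal (F t - c) \<le> emeasure (interval_measure F) (A n)" for n
    unfolding A using below[of "a - 1 / real (Suc n)"] by (intro ennreal_leI) simp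
  ultimately show ?thesis
    using LIMSEQ_le_const by blast
qed

lemma emeasure_zero_if_set_integral_zero:
  fixes f :: "'a \<Rightarrow> real"
  assumes A: "A \<in> sets M" "emeasure M A < \<infinity>"
    and f: "(\<lambda>s. indicator A s * f s) \<in> borel_measurable M" "\<And>s. s \<in> A \<Longrightarrow> 0 \<le> f s \<and> f s \<le> B"
    and int: "(LINT s:A|M. f s) = 0"
    and D: "D \<subseteq> A" "\<And>s. s \<in> D \<Longrightarrow> 0 < f s"
  shows "emeasure M D = 0"
proof -
  have integrable: "integrable M (\<lambda>s. indicator A s * f s)"
  proof (rule Bochner_Integration.integrable_bound[OF _ f(1)])
    show "integrable M (\<lambda>s. B * indicator A s)"
      using A by (intro integrable_mult_right integrable_real_indicator) auto
    show "AE s in M. norm (indicator A s * f s) \<le> norm (B * indicator A s :: real)"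
    proof (rule AE_I2)
      fix s show "norm (indicator A s * f s) \<le> norm (B * indicator A s :: real)"
        using f(2)[of s] by (auto simp: indicator_def)
    qed
  qed
  have "AE s in M. 0 \<le> indicator A s * f s"
    using f(2) by (intro AE_I2) (simp add: indicator_def)
  moreover have "(LINT s|M. indicator A s * f s) = 0"
    using int by (simp add: set_lebesgue_integral_def)
  ultimately have "AE s in M. indicator A s * f s = 0"
    using integral_nonneg_eq_0_iff_AE[OF integrable] by blast
  then obtain N where N: "{s \<in> space M. indicator A s * f s \<noteq> 0} \<subseteq> N" "emeasure M N = 0" "N \<in> sets M"
    by (rule AE_E)
  have "D \<subseteq> N"
  proof
    fix s assume "s \<in> D"
    then have "s \<in> space M" "indicator A s * f s \<noteq> 0"
      using D(1) D(2)[of s] sets.sets_into_space[OF A(1)] by (auto simp: indicator_def)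
    then show "s \<in> N" using N(1) by blast
  qed
  then show ?thesis
    using emeasure_mono[OF _ N(3)] N(2) by (metis le_zero_eq)
qed

lemma mono_right_continuous_extend_max_0:
  fixes K :: "real \<Rightarrow> real"
  assumes mono: "\<And>s r. 0 \<le> s \<Longrightarrow> s \<le> r \<Longrightarrow> K s \<le> K r"
    and rc: "\<And>s. 0 \<le> s \<Longrightarrow> (K \<longlongrightarrow> K s) (at_right s)"
  shows "\<And>x y. x \<le> y \<Longrightarrow> K (max 0 x) \<le> K (max 0 y)"
    and "\<And>x. continuous (at_right x) (\<lambda>s. K (max 0 s))"
proof -
  show "x \<le> y \<Longrightarrow> K (max 0 x) \<le> K (max 0 y)" for x y
    by (rule mono) auto
  show "continuous (at_right x) (\<lambda>s. K (max 0 s))" for x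
  proof (cases "0 \<le> x")
    case True
    have "\<forall>\<^sub>F s in at_right x. K s = K (max 0 s)"
      unfolding eventually_at_right_field using True by (intro exI[of _ "x + 1"]) auto
    with rc[OF True] show ?thesis
      unfolding continuous_within using True by (auto intro: tendsto_cong[THEN iffD1])
  next
    case False
    have "\<forall>\<^sub>F s in at_right x. K (max 0 x) = K (max 0 s)"
      unfolding eventually_at_right_field using False by (intro exI[of _ 0]) auto
    then show ?thesis
      unfolding continuous_within by (auto intro: tendsto_cong[THEN iffD1])
  qed
qed

lemma SP_no_push_above_boundary:
  fixes l y x k :: "real \<Rightarrow> real^'d"
  assumes sp: "SP l y x k" and l: "cadlag l" and a: "0 \<le> a" "a \<le> t"
    and above: "\<And>s. s \<in> {a..t} \<Longrightarrow> l s $ i < x s $ i"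
  shows "emeasure (interval_measure (\<lambda>s. k (max 0 s) $ i)) {a..t} = 0"
proof -
  define \<mu> where "\<mu> = interval_measure (\<lambda>s. k (max 0 s) $ i)"
  define f where "f = (\<lambda>s. x s $ i - l s $ i)"
  have x: "cadlag x" and k: "cadlag k" and mono: "mono_on {0..} (\<lambda>s. k s $ i)"
    and lx: "\<And>s. 0 \<le> s \<Longrightarrow> l s $ i \<le> x s $ i"
    and int: "(LINT s:{0..t}|\<mu>. f s) = 0"
    using sp a unfolding SP_def \<mu>_def f_def by auto
  have k_mono: "\<And>r s. 0 \<le> r \<Longrightarrow> r \<le> s \<Longrightarrow> k r $ i \<le> k s $ i"
    using mono by (auto simp: mono_on_def)
  have k_rc: "\<And>s. 0 \<le> s \<Longrightarrow> ((\<lambda>s. k s $ i) \<longlongrightarrow> k s $ i) (at_right s)"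
    using k unfolding cadlag_def by (auto intro: tendsto_vec_nth)
  note k_ext = mono_right_continuous_extend_max_0[of "\<lambda>s. k s $ i", OF k_mono k_rc]
  have sets: "sets \<mu> = sets borel" by (simp add: \<mu>_def)
  have "emeasure \<mu> {0..t} \<le> emeasure \<mu> {-1<..t}"
    by (rule emeasure_mono) (auto simp: sets)
  also have "\<dots> < \<infinity>"
    unfolding \<mu>_def using a by (simp add: emeasure_interval_measure_Ioc k_ext)
  finally have finite: "emeasure \<mu> {0..t} < \<infinity>" .
  have "(\<lambda>s. indicator {0..t} s * f s) \<in> borel_measurable borel"
    using x l unfolding cadlag_def f_def
    by (intro borel_measurable_right_continuous_on_Icc) (auto intro!: tendsto_diff tendsto_vec_nth)
  then have meas: "(\<lambda>s. indicator {0..t} s * f s) \<in> borel_measurable \<mu>"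
    by (simp add: measurable_cong_sets[OF sets refl])
  obtain Bx Bl where "\<And>s. s \<in> {0..t} \<Longrightarrow> norm (x s) \<le> Bx" "\<And>s. s \<in> {0..t} \<Longrightarrow> norm (l s) \<le> Bl"
    using cadlag_bounded[OF x] cadlag_bounded[OF l] by metis
  then have "0 \<le> f s \<and> f s \<le> Bx + Bl" if "s \<in> {0..t}" for s
    using that lx[of s] component_le_norm_cart[of "x s" i] component_le_norm_cart[of "l s" i]
    by (fastforce simp: f_def)
  from emeasure_zero_if_set_integral_zero[OF _ finite meas this int, of "{a..t}"] above a show ?thesis
    unfolding \<mu>_def f_def by (simp add: sets)
qed

lemma SP_component_running_sup:
  fixes l y x k :: "real \<Rightarrow> real^'d"
  assumes sp: "SP l y x k" and l: "cadlag l"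
  shows "running_sup (\<lambda>t. l t $ i - y t $ i) (\<lambda>t. k t $ i)"
proof -
  have xyk: "\<And>s. 0 \<le> s \<Longrightarrow> x s = y s + k s \<and> l s $ i \<le> x s $ i" and k0: "k 0 = 0"
    and k_rc: "\<And>s. 0 \<le> s \<Longrightarrow> ((\<lambda>s. k s $ i) \<longlongrightarrow> k s $ i) (at_right s)"
    using sp unfolding SP_def cadlag_def by (auto intro: tendsto_vec_nth)
  have k_mono: "\<And>r s. 0 \<le> r \<Longrightarrow> r \<le> s \<Longrightarrow> k r $ i \<le> k s $ i"
    using sp unfolding SP_def mono_on_def by auto
  note k_ext = mono_right_continuous_extend_max_0[of "\<lambda>s. k s $ i", OF k_mono k_rc]
  show ?thesis
    unfolding running_sup_def
  proof (intro allI impI conjI ballI)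
    fix t :: real assume t: "0 \<le> t"
    show "0 \<le> k t $ i" using k_mono[OF _ t] k0 by fastforce
    show "l u $ i - y u $ i \<le> k t $ i" if "u \<in> {0..t}" for u
      using xyk[of u] k_mono[of u t] that by auto
    show "k t $ i < \<epsilon> \<or> (\<exists>u\<in>{0..t}. k t $ i - \<epsilon> < l u $ i - y u $ i)" if \<epsilon>: "\<epsilon> > 0" for \<epsilon>
    proof (rule ccontr)
      assume "\<not> ?thesis"
      then have kt: "\<epsilon> \<le> k t $ i" and below: "\<And>u. u \<in> {0..t} \<Longrightarrow> l u $ i - y u $ i \<le> k t $ i - \<epsilon>"
        by (auto simp: not_less)
      \<comment> \<open>on the last stretch [a,t], where k^i exceeds k^i_t - \<epsilon>/2, x^i stays above l^i,
        yet k^i still grows by \<epsilon>/2 there\<close>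
      define c where "c = k t $ i - \<epsilon> / 2"
      obtain a where a: "0 \<le> a" "a \<le> t" "\<And>s. 0 \<le> s \<Longrightarrow> s < a \<Longrightarrow> k s $ i \<le> c"
        "\<And>s. a \<le> s \<Longrightarrow> s \<le> t \<Longrightarrow> c \<le> k s $ i"
        using first_passage_time[where K = "\<lambda>s. k s $ i" and c = c, OF k_mono k_rc t] \<epsilon> by (auto simp: c_def)
      have "l s $ i < x s $ i" if "s \<in> {a..t}" for s
        using below[of s] xyk[of s] a(1) a(4)[of s] that \<epsilon> by (auto simp: c_def)
      then have null: "emeasure (interval_measure (\<lambda>s. k (max 0 s) $ i)) {a..t} = 0"
        by (rule SP_no_push_above_boundary[OF sp l a(1,2)])
      have "k (max 0 s) $ i \<le> c" if "s < a" for s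
        using a(3)[of "max 0 s"] a(1) that k0 kt \<epsilon> by (cases "s < 0") (auto simp: c_def)
      from interval_measure_Icc_ge[OF k_ext a(2) this]
      have "ennreal (\<epsilon> / 2) \<le> emeasure (interval_measure (\<lambda>s. k (max 0 s) $ i)) {a..t}"
        using t by (simp add: c_def)
      then show False using null \<epsilon> by simp
    qed
  qed
qed

lemma SP_Vp_component_diff_le:
  fixes l y x k l' y' x' k' :: "real \<Rightarrow> real^'d"
  assumes p: "p \<ge> 1" and "SP l y x k" "cadlag l" "SP l' y' x' k'" "cadlag l'"
  shows "Vp p (\<lambda>t. (k t - k' t) $ i) 0 T \<le> Vp_bar p (\<lambda>t. y t - y' t) 0 T + Vp_bar p (\<lambda>t. l t - l' t) 0 T"
proof -
  have "Vp p (\<lambda>t. (k t - k' t) $ i) 0 T \<le> Vp_bar p (\<lambda>t. (l t $ i - y t $ i) - (l' t $ i - y' t $ i)) 0 T"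
    using Vp_running_sup_diff_le[OF p SP_component_running_sup[OF assms(2,3)] SP_component_running_sup[OF assms(4,5)]]
    by simp
  also have "\<dots> = Vp_bar p (\<lambda>t. ((l t - l' t) - (y t - y' t)) $ i) 0 T"
    by (simp add: algebra_simps)
  also have "\<dots> \<le> Vp_bar p (\<lambda>t. (l t - l' t) - (y t - y' t)) 0 T"
    using p by (intro Vp_bar_component_le) simp
  also have "\<dots> \<le> Vp_bar p (\<lambda>t. y t - y' t) 0 T + Vp_bar p (\<lambda>t. l t - l' t) 0 T"
    using Vp_bar_diff_le[OF p] by (simp add: add.commute)
  finally show ?thesis .
qed

lemma SP_Vp_regulator_diff_le:
  fixes l y x k l' y' x' k' :: "real \<Rightarrow> real^'d"
  assumes p: "p \<ge> 1" and sp: "SP l y x k" "cadlag l" "SP l' y' x' k'" "cadlag l'"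
  shows "Vp p (\<lambda>t. k t - k' t) 0 T
    \<le> of_nat CARD('d) * (Vp_bar p (\<lambda>t. y t - y' t) 0 T + Vp_bar p (\<lambda>t. l t - l' t) 0 T)"
proof -
  have "Vp p (\<lambda>t. k t - k' t) 0 T \<le> (\<Sum>i\<in>UNIV. Vp p (\<lambda>t. (k t - k' t) $ i) 0 T)"
    by (rule Vp_le_sum_components[OF p])
  also have "\<dots> \<le> (\<Sum>i\<in>(UNIV :: 'd set). Vp_bar p (\<lambda>t. y t - y' t) 0 T + Vp_bar p (\<lambda>t. l t - l' t) 0 T)"
    by (rule sum_mono) (rule SP_Vp_component_diff_le[OF p sp])
  finally show ?thesis by simp
qed

lemma SP_Vp_bar_solution_diff_le:
  fixes l y x k l' y' x' k' :: "real \<Rightarrow> real^'d"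
  assumes p: "p \<ge> 1" and sp: "SP l y x k" "SP l' y' x' k'"
  shows "Vp_bar p (\<lambda>t. x t - x' t) 0 T \<le> Vp_bar p (\<lambda>t. y t - y' t) 0 T + Vp p (\<lambda>t. k t - k' t) 0 T"
proof -
  have x: "x t - x' t = (y t - y' t) + (k t - k' t)" if "0 \<le> t" for t
    using sp that by (simp add: SP_def)
  have "Vp p (\<lambda>t. x t - x' t) 0 T = Vp p (\<lambda>t. (y t - y' t) + (k t - k' t)) 0 T"
    by (rule Vp_cong) (simp add: x)
  also have "\<dots> \<le> Vp p (\<lambda>t. y t - y' t) 0 T + Vp p (\<lambda>t. k t - k' t) 0 T"
    by (rule Vp_add_le[OF p])
  finally show ?thesis
    using x[of 0] sp unfolding Vp_bar_def SP_def by (simp add: add_right_mono ac_simps)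
qed

theorem corollary1:
  fixes l y l' y' x k x' k' :: "real \<Rightarrow> real^'d" and p T :: real
  assumes "p \<ge> 1"
    and "cadlag l" "cadlag y" "cadlag l'" "cadlag y'"
    and "\<forall>i. l 0 $ i \<le> y 0 $ i" "\<forall>i. l' 0 $ i \<le> y' 0 $ i"
    and "SP l y x k" "SP l' y' x' k'"
    and "T \<ge> 0"
  shows "(Vp_bar p (\<lambda>t. x t - x' t) 0 T
           \<le> of_nat (CARD('d) + 1) * Vp_bar p (\<lambda>t. y t - y' t) 0 T
             + of_nat CARD('d) * Vp_bar p (\<lambda>t. l t - l' t) 0 T)
         \<and> (Vp_bar p (\<lambda>t. k t - k' t) 0 T
           \<le> of_nat CARD('d) * Vp_bar p (\<lambda>t. y t - y' t) 0 T
             + of_nat CARD('d) * Vp_bar p (\<lambda>t. l t - l' t) 0 T)"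
proof -
  let ?Y = "Vp_bar p (\<lambda>t. y t - y' t) 0 T" and ?L = "Vp_bar p (\<lambda>t. l t - l' t) 0 T"
  note K = SP_Vp_regulator_diff_le[OF assms(1,8,2,9,4), of T]
  have "Vp_bar p (\<lambda>t. x t - x' t) 0 T \<le> ?Y + of_nat CARD('d) * (?Y + ?L)"
    using SP_Vp_bar_solution_diff_le[OF assms(1,8,9), of T] add_left_mono[OF K, of ?Y] by (rule order_trans)
  moreover have "Vp_bar p (\<lambda>t. k t - k' t) 0 T = Vp p (\<lambda>t. k t - k' t) 0 T"
    using assms(8,9) by (simp add: Vp_bar_def SP_def)
  ultimately show ?thesis
    using K by (simp add: distrib_left distrib_right add.assoc)
qed
end
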